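(* Let $G$ be a finite abelian group, $H\le G$, and let $m_I\ge0$ be integers for $I\le H$. Let $A=\coprod_{I\le H}\coprod_{m_I}G/I$ (the disjoint union of $m_I$ copies of $G/I$ for each $I\le H$) and let $\mathrm{Pr}:A\to G/H$ be the $G$-map given on each copy of $G/I$ by the natural projection $gI\mapsto gH$. Let $S$ be the set of maps $s:G/H\to A$ with $\mathrm{Pr}\circ s=\mathrm{id}_{G/H}$, with $G$-action $({}^g s)(x)=g\,s(g^{-1}x)$, and for $s\in S$ let $G_s$ be its stabilizer. Then for every $K\le G$, $$\#\{s\in S\mid K\le G_s\}=\Big(\sum_{K\cap H\le I\le H}m_I\,|H:I|\Big)^{|G:KH|}.$$ Consequently, the numbers $c(K)=\#\{s\in S\mid G_s=K\}$ satisfy $c(K)=\big(\sum_{K\cap H\le I\le H}m_I|H:I|\big)^{|G:KH|}-\sum_{K<L\le G}c(L)$.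
   Context: $G$-sets are finite sets with a left action of the finite group $G$; $G/I$ denotes the set of left cosets with the left multiplication action. $|H:I|$ is the index, and $KH$ the subgroup generated by $K$ and $H$ (a product since $G$ is abelian). *)

theory Defs
  imports "HOL-Algebra.Algebra"
begin

text \<open>The G-set A: disjoint union over subgroups I of H of m I copies of G/I.
  An element is a triple (I, j, c): copy number j < m I of the left coset c of I.\<close>
definition Aset :: "('a, 'b) monoid_scheme \<Rightarrow> 'a set \<Rightarrow> ('a set \<Rightarrow> nat) \<Rightarrow> ('a set \<times> nat \<times> 'a set) set" where
  "Aset G H m = {(I, j, c). subgroup I G \<and> I \<subseteq> H \<and> j < m I \<and> c \<in> lcosets\<^bsub>G\<^esub> I}"

definition Aact :: "('a, 'b) monoid_scheme \<Rightarrow> 'a \<Rightarrow> ('a set \<times> nat \<times> 'a set) \<Rightarrow> ('a set \<times> nat \<times> 'a set)" where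
  "Aact G g a = (case a of (I, j, c) \<Rightarrow> (I, j, g <#\<^bsub>G\<^esub> c))"

text \<open>The projection Pr : A \<rightarrow> G/H, gI \<mapsto> gH (note gI \<cdot> H = gH as I \<subseteq> H).\<close>
definition Pr :: "('a, 'b) monoid_scheme \<Rightarrow> 'a set \<Rightarrow> ('a set \<times> nat \<times> 'a set) \<Rightarrow> 'a set" where
  "Pr G H a = (case a of (I, j, c) \<Rightarrow> c <#>\<^bsub>G\<^esub> H)"

definition Sset :: "('a, 'b) monoid_scheme \<Rightarrow> 'a set \<Rightarrow> ('a set \<Rightarrow> nat) \<Rightarrow> ('a set \<Rightarrow> ('a set \<times> nat \<times> 'a set)) set" where
  "Sset G H m = {s. s \<in> extensional (lcosets\<^bsub>G\<^esub> H) \<and>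
      (\<forall>x \<in> lcosets\<^bsub>G\<^esub> H. s x \<in> Aset G H m \<and> Pr G H (s x) = x)}"

definition Sact :: "('a, 'b) monoid_scheme \<Rightarrow> 'a set \<Rightarrow> 'a \<Rightarrow> ('a set \<Rightarrow> ('a set \<times> nat \<times> 'a set)) \<Rightarrow> ('a set \<Rightarrow> ('a set \<times> nat \<times> 'a set))" where
  "Sact G H g s = (\<lambda>x \<in> lcosets\<^bsub>G\<^esub> H. Aact G g (s (inv\<^bsub>G\<^esub> g <#\<^bsub>G\<^esub> x)))"

definition stab :: "('a, 'b) monoid_scheme \<Rightarrow> 'a set \<Rightarrow> ('a set \<Rightarrow> ('a set \<times> nat \<times> 'a set)) \<Rightarrow> 'a set" where
  "stab G H s = {g \<in> carrier G. Sact G H g s = s}"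

definition idx :: "'a set \<Rightarrow> 'a set \<Rightarrow> nat" where
  "idx H I = card H div card I"

definition cnt :: "('a, 'b) monoid_scheme \<Rightarrow> 'a set \<Rightarrow> ('a set \<Rightarrow> nat) \<Rightarrow> 'a set \<Rightarrow> nat" where
  "cnt G H m K = card {s \<in> Sset G H m. stab G H s = K}"

end

theory Submission
  imports Defs
begin

text \<open>
  A section is fixed by \<open>K\<close> iff it is \<open>K\<close>-equivariant. Fix a transversal \<open>R\<close> of \<open>G/KH\<close>: every
  coset of \<open>H\<close> is \<open>krH\<close> with \<open>r \<in> R\<close> unique and \<open>k \<in> K\<close> unique modulo \<open>K \<inter> H\<close>. Hence a
  \<open>K\<close>-equivariant section is freely determined by the values \<open>r\<inverse>s(rH)\<close>, \<open>r \<in> R\<close>, which range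
  over the points of the fibre \<open>Pr\<inverse>(H)\<close> fixed by \<open>K \<inter> H\<close>. These are the cosets \<open>hI\<close>, \<open>h \<in> H\<close>,
  in the copies of \<open>G/I\<close> with \<open>K \<inter> H \<le> I \<le> H\<close>, i.e. \<open>m\<^sub>I |H:I|\<close> points for each such \<open>I\<close>; and
  \<open>|R| = |G:KH|\<close>. The recursion for \<open>c(K)\<close> follows by sorting the sections fixed by \<open>K\<close>
  according to their stabilizer.
\<close>

no_notation (ASCII) subset_mset (infix \<open><#\<close> 50)

lemma card_supsets_eq_sum_fibres:
  assumes "finite S" "finite T" "K \<in> T" "\<And>s. s \<in> S \<Longrightarrow> f s \<in> T"
  shows "card {s \<in> S. K \<subseteq> f s}
       = card {s \<in> S. f s = K} + (\<Sum>L \<in> {L \<in> T. K \<subset> L}. card {s \<in> S. f s = L})"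
proof -
  have "{s \<in> S. K \<subseteq> f s} = (\<Union>L \<in> {L \<in> T. K \<subseteq> L}. {s \<in> S. f s = L})"
    using assms(4) by auto
  then have "card {s \<in> S. K \<subseteq> f s} = (\<Sum>L \<in> {L \<in> T. K \<subseteq> L}. card {s \<in> S. f s = L})"
    using assms(1,2) by (simp only:) (rule card_UN_disjoint, auto)
  also have "{L \<in> T. K \<subseteq> L} = insert K {L \<in> T. K \<subset> L}"
    using assms(3) by auto
  finally show ?thesis using assms(2) by simp
qed

lemma (in group) lcos_eq_iff:
  assumes "subgroup I G" "g \<in> carrier G" "g' \<in> carrier G"
  shows "g <# I = g' <# I \<longleftrightarrow> inv g \<otimes> g' \<in> I"
proof
  assume "g <# I = g' <# I"
  then have "g' \<in> g <# I" using lcos_self[OF assms(3,1)] by simp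
  then show "inv g \<otimes> g' \<in> I" using subgroup.lcos_module_imp[OF assms(1) is_group assms(2)] by blast
next
  assume "inv g \<otimes> g' \<in> I"
  then have "g' \<in> g <# I" using subgroup.lcos_module_rev[OF assms(1) is_group assms(2,3)] by blast
  then show "g <# I = g' <# I" using l_repr_independence[OF _ assms(2,1)] by blast
qed

lemma (in group) lcosets_m_assoc:
  assumes "subgroup H G" "x \<in> lcosets H" "a \<in> carrier G" "b \<in> carrier G"
  shows "(a \<otimes> b) <# x = a <# (b <# x)"
  using lcos_m_assoc assms subgroup.lcosets_carrier[OF assms(1) is_group assms(2)] by simp

lemma (in group) lcosets_one:
  assumes "subgroup H G" "x \<in> lcosets H"
  shows "\<one> <# x = x"
  using lcos_mult_one subgroup.lcosets_carrier[OF assms(1) is_group assms(2)] by simp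

lemma (in group) lcos_in_lcosets:
  assumes "subgroup H G" "x \<in> lcosets H" "g \<in> carrier G"
  shows "g <# x \<in> lcosets H"
  using assms unfolding LCOSETS_def by (auto simp: lcos_m_assoc subgroup.subset)

lemma (in group) inv_lcos_lcos:
  assumes "subgroup H G" "x \<in> lcosets H" "g \<in> carrier G"
  shows "inv g <# (g <# x) = x"
  using lcosets_m_assoc[OF assms(1,2) inv_closed[OF assms(3)] assms(3)] lcosets_one[OF assms(1,2)] assms(3)
  by simp

lemma (in group) lcos_set_mult_subgroup:
  assumes "subgroup I G" "subgroup H G" "I \<subseteq> H" "g \<in> carrier G"
  shows "(g <# I) <#> H = g <# H"
proof -
  have "I <#> H = H"
  proof
    show "I <#> H \<subseteq> H"
      unfolding set_mult_def using assms(3) subgroup.m_closed[OF assms(2)] by blast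
    show "H \<subseteq> I <#> H"
      unfolding set_mult_def using subgroup.one_closed[OF assms(1)] subgroup.mem_carrier[OF assms(2)]
      by force
  qed
  then show ?thesis
    using setmult_lcos_assoc[OF subgroup.subset[OF assms(1)] subgroup.subset[OF assms(2)] assms(4)]
    by simp
qed

lemma (in comm_group) lcos_fixed_iff:
  assumes "subgroup I G" "g \<in> carrier G" "k \<in> carrier G"
  shows "k <# (g <# I) = g <# I \<longleftrightarrow> k \<in> I"
proof -
  have "k <# (g <# I) = (g \<otimes> k) <# I"
    using lcos_m_assoc[OF subgroup.subset[OF assms(1)] assms(3,2)] assms(2,3) by (simp add: m_comm)
  moreover have "g <# I = (g \<otimes> k) <# I \<longleftrightarrow> k \<in> I"
    using lcos_eq_iff[OF assms(1,2), of "g \<otimes> k"] assms(2,3) by (simp add: m_assoc[symmetric])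
  ultimately show ?thesis by metis
qed

lemma (in group) card_lcosets:
  assumes "finite (carrier G)" "subgroup N G"
  shows "card (lcosets N) = idx (carrier G) N"
proof -
  have "card N > 0"
    using assms subgroup.one_closed[OF assms(2)] subgroup.subset[OF assms(2)]
    by (metis card_gt_0_iff empty_iff finite_subset)
  then show ?thesis
    using l_lagrange[OF assms] unfolding idx_def order_def by (metis nonzero_mult_div_cancel_right less_irrefl)
qed

lemma (in group) card_lcosets_subgroup:
  assumes "finite H" "subgroup H G" "subgroup I G" "I \<subseteq> H"
  shows "card (lcosets\<^bsub>G\<lparr>carrier := H\<rparr>\<^esub> I) = idx H I"
  using group.card_lcosets[OF subgroup_imp_group[OF assms(2)]] subgroup_incl[OF assms(3,2,4)] assms(1)
  by simp

lemma (in group) transversal_exists: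
  assumes "subgroup N G"
  obtains R where "R \<subseteq> carrier G" "bij_betw (\<lambda>r. r <# N) R (lcosets N)"
proof -
  define rep where "rep C = (SOME g. g \<in> C)" for C :: "'a set"
  have rep: "rep C \<in> carrier G \<and> rep C <# N = C" if C: "C \<in> lcosets N" for C
  proof -
    obtain a where a: "a \<in> carrier G" "C = a <# N" using C unfolding LCOSETS_def by blast
    then have "rep C \<in> C" unfolding rep_def using lcos_self[OF a(1) assms] by (metis someI)
    then show ?thesis using a l_repr_independence[OF _ a(1) assms] l_coset_carrier[OF _ a(1) assms] by auto
  qed
  have "bij_betw (\<lambda>r. r <# N) (rep ` (lcosets N)) (lcosets N)"
    by (rule bij_betw_byWitness[where f' = rep]) (use rep in auto)
  then show ?thesis using that rep by blast
qed

locale coset_sections = comm_group +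
  fixes H :: "'a set" and m :: "'a set \<Rightarrow> nat"
  assumes subgroup_H: "subgroup H G"
begin

lemma AsetE:
  assumes "a \<in> Aset G H m"
  obtains I j g where "a = (I, j, g <# I)" "subgroup I G" "I \<subseteq> H" "j < m I" "g \<in> carrier G"
  using assms unfolding Aset_def LCOSETS_def by blast

lemma AsetI:
  assumes "subgroup I G" "I \<subseteq> H" "j < m I" "g \<in> carrier G"
  shows "(I, j, g <# I) \<in> Aset G H m"
  using assms unfolding Aset_def LCOSETS_def by blast

lemma Aact_closed:
  assumes "a \<in> Aset G H m" "g \<in> carrier G"
  shows "Aact G g a \<in> Aset G H m"
  using assms(1)
proof (cases rule: AsetE)
  case (1 I j c)
  then show ?thesis
    using assms(2) AsetI[of I j "g \<otimes> c"] by (simp add: Aact_def lcos_m_assoc subgroup.subset)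
qed

lemma Aact_mult:
  assumes "a \<in> Aset G H m" "g \<in> carrier G" "h \<in> carrier G"
  shows "Aact G g (Aact G h a) = Aact G (g \<otimes> h) a"
  using assms(1)
proof (cases rule: AsetE)
  case (1 I j c)
  then have "c <# I \<subseteq> carrier G" using l_coset_subset_G subgroup.subset by blast
  then show ?thesis using 1 assms(2,3) by (simp add: Aact_def lcos_m_assoc)
qed

lemma Aact_one:
  assumes "a \<in> Aset G H m"
  shows "Aact G \<one> a = a"
  using assms
proof (cases rule: AsetE)
  case (1 I j c)
  then show ?thesis by (simp add: Aact_def lcos_mult_one l_coset_subset_G subgroup.subset)
qed

lemma Pr_lcos:
  assumes "subgroup I G" "I \<subseteq> H" "g \<in> carrier G"
  shows "Pr G H (I, j, g <# I) = g <# H"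
  using lcos_set_mult_subgroup[OF assms(1) subgroup_H assms(2,3)] by (simp add: Pr_def)

lemma Pr_Aact:
  assumes "a \<in> Aset G H m" "g \<in> carrier G"
  shows "Pr G H (Aact G g a) = g <# Pr G H a"
  using assms(1)
proof (cases rule: AsetE)
  case (1 I j c)
  then show ?thesis
    using assms(2) Pr_lcos[of I "g \<otimes> c"] Pr_lcos[of I c] subgroup.subset[OF subgroup_H]
    by (simp add: Aact_def lcos_m_assoc subgroup.subset)
qed

lemma SsetD:
  assumes "s \<in> Sset G H m" "x \<in> lcosets H"
  shows "s x \<in> Aset G H m" "Pr G H (s x) = x"
  using assms unfolding Sset_def by auto

lemma Sset_extensional: "s \<in> Sset G H m \<Longrightarrow> s \<in> extensional (lcosets H)"
  unfolding Sset_def by blast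

lemma Sact_eq_iff:
  assumes "s \<in> Sset G H m" "g \<in> carrier G"
  shows "Sact G H g s = s \<longleftrightarrow> (\<forall>x\<in>lcosets H. s (g <# x) = Aact G g (s x))"
proof -
  have "Sact G H g s = s \<longleftrightarrow> (\<forall>y\<in>lcosets H. Aact G g (s (inv g <# y)) = s y)"
  proof
    assume "Sact G H g s = s"
    then show "\<forall>y\<in>lcosets H. Aact G g (s (inv g <# y)) = s y"
      unfolding Sact_def by (metis restrict_apply')
  next
    assume "\<forall>y\<in>lcosets H. Aact G g (s (inv g <# y)) = s y"
    then show "Sact G H g s = s"
      unfolding Sact_def using Sset_extensional[OF assms(1)]
      by (intro extensionalityI[of _ "lcosets H"]) auto
  qed
  also have "\<dots> \<longleftrightarrow> (\<forall>x\<in>lcosets H. s (g <# x) = Aact G g (s x))"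
  proof -
    have "inv g <# (g <# x) = x" "g <# (inv g <# x) = x" if "x \<in> lcosets H" for x
      using inv_lcos_lcos[OF subgroup_H that] assms(2) inv_lcos_lcos[OF subgroup_H that, of "inv g"]
      by auto
    moreover have "g <# x \<in> lcosets H" "inv g <# x \<in> lcosets H" if "x \<in> lcosets H" for x
      using lcos_in_lcosets[OF subgroup_H that] assms(2) by auto
    ultimately show ?thesis by metis
  qed
  finally show ?thesis .
qed

lemma stab_eq:
  assumes "s \<in> Sset G H m"
  shows "stab G H s = {g \<in> carrier G. \<forall>x\<in>lcosets H. s (g <# x) = Aact G g (s x)}"
  using Sact_eq_iff[OF assms] unfolding stab_def by blast

lemma subset_stab_iff:
  assumes "s \<in> Sset G H m" "K \<subseteq> carrier G"
  shows "K \<subseteq> stab G H s \<longleftrightarrow> (\<forall>k\<in>K. \<forall>x\<in>lcosets H. s (k <# x) = Aact G k (s x))"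
  using assms stab_eq by auto

lemma subgroup_stab:
  assumes "s \<in> Sset G H m"
  shows "subgroup (stab G H s) G"
proof (rule subgroupI)
  have stab: "g \<in> stab G H s \<longleftrightarrow> g \<in> carrier G \<and> (\<forall>x\<in>lcosets H. s (g <# x) = Aact G g (s x))" for g
    using stab_eq[OF assms] by blast
  show "stab G H s \<subseteq> carrier G" using stab by blast
  have "\<one> \<in> stab G H s"
    using stab lcosets_one[OF subgroup_H] Aact_one SsetD(1)[OF assms] by simp
  then show "stab G H s \<noteq> {}" by blast
  fix a b assume a: "a \<in> stab G H s" and b: "b \<in> stab G H s"
  have ac: "a \<in> carrier G" and bc: "b \<in> carrier G" using a b stab by auto
  have "s (inv a <# x) = Aact G (inv a) (s x)" if x: "x \<in> lcosets H" for x
  proof -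
    have y: "inv a <# x \<in> lcosets H" using lcos_in_lcosets[OF subgroup_H x] ac by simp
    have "s x = s (a <# (inv a <# x))" using inv_lcos_lcos[OF subgroup_H x, of "inv a"] ac by simp
    also have "\<dots> = Aact G a (s (inv a <# x))" using a y stab by blast
    finally have "Aact G (inv a) (s x) = Aact G (inv a \<otimes> a) (s (inv a <# x))"
      using Aact_mult[OF SsetD(1)[OF assms y]] ac by simp
    then show ?thesis using Aact_one[OF SsetD(1)[OF assms y]] ac by simp
  qed
  then show "inv a \<in> stab G H s" using stab ac by simp
  have "s ((a \<otimes> b) <# x) = Aact G (a \<otimes> b) (s x)" if x: "x \<in> lcosets H" for x
  proof -
    have y: "b <# x \<in> lcosets H" using lcos_in_lcosets[OF subgroup_H x bc] .
    have "s ((a \<otimes> b) <# x) = s (a <# (b <# x))" using lcosets_m_assoc[OF subgroup_H x ac bc] by simp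
    also have "\<dots> = Aact G a (Aact G b (s x))" using a b x y stab by simp
    also have "\<dots> = Aact G (a \<otimes> b) (s x)" using Aact_mult[OF SsetD(1)[OF assms x] ac bc] .
    finally show ?thesis .
  qed
  then show "a \<otimes> b \<in> stab G H s" using stab ac bc by simp
qed

lemma finite_Aset:
  assumes "finite (carrier G)"
  shows "finite (Aset G H m)"
proof (rule finite_subset)
  show "Aset G H m \<subseteq> (SIGMA I:Pow (carrier G). {..<m I} \<times> Pow (carrier G))"
  proof
    fix a assume "a \<in> Aset G H m"
    then show "a \<in> (SIGMA I:Pow (carrier G). {..<m I} \<times> Pow (carrier G))"
    proof (cases rule: AsetE)
      case (1 I j g)
      then show ?thesis using l_coset_subset_G[OF subgroup.subset[OF 1(2)] 1(5)] subgroup.subset[OF 1(2)] by auto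
    qed
  qed
  show "finite (SIGMA I:Pow (carrier G). {..<m I} \<times> Pow (carrier G))" using assms by auto
qed

lemma finite_Sset:
  assumes "finite (carrier G)"
  shows "finite (Sset G H m)"
proof (rule finite_subset)
  show "Sset G H m \<subseteq> lcosets H \<rightarrow>\<^sub>E Aset G H m" unfolding Sset_def by (auto simp: extensional_def)
  have "finite (lcosets H)"
    using lcosets_subset_PowG[OF subgroup_H] assms by (meson finite_Pow_iff finite_subset)
  then show "finite (lcosets H \<rightarrow>\<^sub>E Aset G H m)" using finite_Aset[OF assms] by (simp add: finite_PiE)
qed

definition fixed_fibre :: "'a set \<Rightarrow> ('a set \<times> nat \<times> 'a set) set" where
  "fixed_fibre K = {a \<in> Aset G H m. Pr G H a = H \<and> (\<forall>k\<in>K \<inter> H. Aact G k a = a)}"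

lemma fixed_fibre_eq:
  "fixed_fibre K
     = (SIGMA I:{I. subgroup I G \<and> K \<inter> H \<subseteq> I \<and> I \<subseteq> H}. {..<m I} \<times> lcosets\<^bsub>G\<lparr>carrier := H\<rparr>\<^esub> I)"
  (is "_ = ?Sigma")
proof
  show "fixed_fibre K \<subseteq> ?Sigma"
  proof
    fix a assume a: "a \<in> fixed_fibre K"
    then have "a \<in> Aset G H m" unfolding fixed_fibre_def by blast
    then obtain I j g where a1: "a = (I, j, g <# I)" "subgroup I G" "I \<subseteq> H" "j < m I" "g \<in> carrier G"
      by (rule AsetE)
    have "g <# H = H" using a Pr_lcos[OF a1(2,3,5)] unfolding a1(1) fixed_fibre_def by simp
    then have "g \<in> H" using lcos_self[OF a1(5) subgroup_H] by simp
    moreover have "K \<inter> H \<subseteq> I"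
    proof
      fix k assume k: "k \<in> K \<inter> H"
      then have "k <# (g <# I) = g <# I"
        using a unfolding a1(1) fixed_fibre_def by (simp add: Aact_def)
      then show "k \<in> I"
        using lcos_fixed_iff[OF a1(2,5)] k subgroup.subset[OF subgroup_H] by blast
    qed
    ultimately show "a \<in> ?Sigma" using a1 unfolding LCOSETS_def by auto
  qed
next
  show "?Sigma \<subseteq> fixed_fibre K"
  proof
    fix a assume "a \<in> ?Sigma"
    then obtain I j g where a: "a = (I, j, g <# I)" "subgroup I G" "K \<inter> H \<subseteq> I" "I \<subseteq> H" "j < m I" "g \<in> H"
      unfolding LCOSETS_def by auto
    have gc: "g \<in> carrier G" using a(6) subgroup.subset[OF subgroup_H] by blast
    have "Pr G H a = H" using Pr_lcos[OF a(2,4) gc] coset_join3[OF gc subgroup_H a(6)] a(1) by simp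
    moreover have "Aact G k a = a" if "k \<in> K \<inter> H" for k
      using that a lcos_fixed_iff[OF a(2) gc, of k] subgroup.subset[OF subgroup_H] by (auto simp: Aact_def)
    ultimately show "a \<in> fixed_fibre K"
      using AsetI[OF a(2,4,5) gc] a(1) unfolding fixed_fibre_def by blast
  qed
qed

lemma card_fixed_fibre:
  assumes "finite (carrier G)"
  shows "card (fixed_fibre K) = (\<Sum>I \<in> {I. subgroup I G \<and> K \<inter> H \<subseteq> I \<and> I \<subseteq> H}. m I * idx H I)"
proof -
  have finH: "finite H" using assms subgroup.subset[OF subgroup_H] finite_subset by blast
  have "finite {I. subgroup I G \<and> K \<inter> H \<subseteq> I \<and> I \<subseteq> H}"
    using finH by (rule finite_subset[rotated, OF finite_Pow_iff[THEN iffD2]]) blast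
  moreover have "finite (lcosets\<^bsub>G\<lparr>carrier := H\<rparr>\<^esub> I)" for I
    using finH unfolding LCOSETS_def by simp
  ultimately show ?thesis
    unfolding fixed_fibre_eq
    using card_lcosets_subgroup[OF finH subgroup_H] by (simp add: card_cartesian_product)
qed

definition restrict_section :: "'a set \<Rightarrow> ('a set \<Rightarrow> 'a set \<times> nat \<times> 'a set) \<Rightarrow> 'a \<Rightarrow> 'a set \<times> nat \<times> 'a set"
  where "restrict_section R s = (\<lambda>r\<in>R. Aact G (inv r) (s (r <# H)))"

text \<open>The factorisation \<open>x = krH\<close> picked by \<open>SOME\<close> is irrelevant for data in the fixed fibre, since
  \<open>k\<close> is determined up to \<open>K \<inter> H\<close> (see \<open>extend_section_eq\<close>).\<close>
definition extend_section :: "'a set \<Rightarrow> 'a set \<Rightarrow> ('a \<Rightarrow> 'a set \<times> nat \<times> 'a set) \<Rightarrow> 'a set \<Rightarrow> 'a set \<times> nat \<times> 'a set"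
  where "extend_section K R f = (\<lambda>x\<in>lcosets H.
     case SOME (k, r). k \<in> K \<and> r \<in> R \<and> x = (k \<otimes> r) <# H of (k, r) \<Rightarrow> Aact G (k \<otimes> r) (f r))"

context
  fixes K R :: "'a set"
  assumes subgroup_K: "subgroup K G"
    and transversal_carrier: "R \<subseteq> carrier G"
    and transversal: "bij_betw (\<lambda>r. r <# (K <#> H)) R (lcosets (K <#> H))"
begin

lemma transversal_decompose:
  assumes "x \<in> lcosets H"
  obtains k r where "k \<in> K" "r \<in> R" "x = (k \<otimes> r) <# H"
proof -
  have KH: "subgroup (K <#> H) G" using mult_subgroups[OF subgroup_K subgroup_H] .
  obtain g where g: "g \<in> carrier G" "x = g <# H" using assms unfolding LCOSETS_def by blast
  have "g <# (K <#> H) \<in> (\<lambda>r. r <# (K <#> H)) ` R"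
    using transversal g(1) unfolding bij_betw_def LCOSETS_def by blast
  then obtain r where r: "r \<in> R" "r <# (K <#> H) = g <# (K <#> H)" by auto
  have rc: "r \<in> carrier G" using r(1) transversal_carrier by blast
  have "inv r \<otimes> g \<in> K <#> H" using lcos_eq_iff[OF KH rc g(1)] r(2) by simp
  then obtain k h where kh: "k \<in> K" "h \<in> H" "inv r \<otimes> g = k \<otimes> h" unfolding set_mult_def by blast
  have kc: "k \<in> carrier G" and hc: "h \<in> carrier G"
    using kh subgroup.subset[OF subgroup_K] subgroup.subset[OF subgroup_H] by auto
  have "g = r \<otimes> (inv r \<otimes> g)" using rc g(1) by (simp add: m_assoc[symmetric])
  also have "\<dots> = (r \<otimes> k) \<otimes> h" using kh(3) rc kc hc by (simp add: m_assoc)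
  also have "\<dots> = (k \<otimes> r) \<otimes> h" using rc kc by (simp add: m_comm)
  finally have "x = (k \<otimes> r) <# (h <# H)"
    using g(2) lcos_m_assoc[OF subgroup.subset[OF subgroup_H]] rc kc hc by simp
  then have "x = (k \<otimes> r) <# H" using coset_join3[OF hc subgroup_H kh(2)] by simp
  then show ?thesis using that kh(1) r(1) by blast
qed

lemma transversal_unique:
  assumes k: "k \<in> K" "k' \<in> K" and r: "r \<in> R" "r' \<in> R"
    and eq: "(k \<otimes> r) <# H = (k' \<otimes> r') <# H"
  shows "r = r'" "inv k \<otimes> k' \<in> H"
proof -
  have KH: "subgroup (K <#> H) G" using mult_subgroups[OF subgroup_K subgroup_H] .
  have rc: "r \<in> carrier G" "r' \<in> carrier G" using r transversal_carrier by auto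
  have kc: "k \<in> carrier G" "k' \<in> carrier G" using k subgroup.subset[OF subgroup_K] by auto
  define h where "h = inv (k \<otimes> r) \<otimes> (k' \<otimes> r')"
  have hH: "h \<in> H" using lcos_eq_iff[OF subgroup_H] eq rc kc unfolding h_def by simp
  have hc: "h \<in> carrier G" using hH subgroup.subset[OF subgroup_H] by blast
  have h_split: "h = (inv k \<otimes> k') \<otimes> (inv r \<otimes> r')" unfolding h_def using rc kc by (simp add: inv_mult m_ac)
  have "inv r \<otimes> r' = inv (inv k \<otimes> k') \<otimes> h"
    using inv_solve_left[of "inv r \<otimes> r'" "inv k \<otimes> k'" h] h_split rc kc hc by simp
  moreover have "inv (inv k \<otimes> k') \<in> K"
    using k subgroup_K by (simp add: subgroup.m_closed subgroup.m_inv_closed)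
  ultimately have "inv r \<otimes> r' \<in> K <#> H" using hH unfolding set_mult_def by blast
  then have "r <# (K <#> H) = r' <# (K <#> H)" using lcos_eq_iff[OF KH rc] by simp
  then show rr: "r = r'" using transversal r unfolding bij_betw_def by (meson inj_onD)
  show "inv k \<otimes> k' \<in> H" using hH h_split rr rc kc by simp
qed

lemma extend_section_eq:
  assumes k: "k \<in> K" and r: "r \<in> R" and fr: "f r \<in> fixed_fibre K"
  shows "extend_section K R f ((k \<otimes> r) <# H) = Aact G (k \<otimes> r) (f r)"
proof -
  have rc: "r \<in> carrier G" and kc: "k \<in> carrier G"
    using r k transversal_carrier subgroup.subset[OF subgroup_K] by auto
  define x where "x = (k \<otimes> r) <# H"
  have x: "x \<in> lcosets H" unfolding x_def LCOSETS_def using kc rc by blast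
  define p where "p = (SOME (k', r'). k' \<in> K \<and> r' \<in> R \<and> x = (k' \<otimes> r') <# H)"
  have "case p of (k', r') \<Rightarrow> k' \<in> K \<and> r' \<in> R \<and> x = (k' \<otimes> r') <# H"
    unfolding p_def by (rule someI[of _ "(k, r)"]) (use k r x_def in simp)
  then obtain k' r' where p: "p = (k', r')" and k': "k' \<in> K" and r': "r' \<in> R"
    and x': "x = (k' \<otimes> r') <# H"
    by (cases p) auto
  have rr: "r' = r" and kk: "inv k' \<otimes> k \<in> H"
    using transversal_unique[OF k' k r' r] x' unfolding x_def by auto
  have k'c: "k' \<in> carrier G" using k' subgroup.subset[OF subgroup_K] by blast
  have "inv k' \<otimes> k \<in> K" using k k' subgroup_K by (simp add: subgroup.m_closed subgroup.m_inv_closed)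
  then have fixed: "Aact G (inv k' \<otimes> k) (f r) = f r" using fr kk unfolding fixed_fibre_def by blast
  have fA: "f r \<in> Aset G H m" using fr unfolding fixed_fibre_def by blast
  have "extend_section K R f x = Aact G (k' \<otimes> r) (f r)"
    using x unfolding extend_section_def by (simp add: p_def[symmetric] p rr)
  also have "\<dots> = Aact G ((k' \<otimes> r) \<otimes> (inv k' \<otimes> k)) (f r)"
    using fixed Aact_mult[OF fA, of "k' \<otimes> r" "inv k' \<otimes> k"] k'c rc kc by simp
  also have "(k' \<otimes> r) \<otimes> (inv k' \<otimes> k) = r \<otimes> (k' \<otimes> (inv k' \<otimes> k))"
    using k'c rc kc by (simp add: m_comm[of k' r] m_assoc)
  also have "k' \<otimes> (inv k' \<otimes> k) = k"
    using k'c kc by (simp add: m_assoc[symmetric])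
  also have "r \<otimes> k = k \<otimes> r"
    using rc kc by (rule m_comm)
  finally show ?thesis unfolding x_def .
qed

lemma restrict_section_mem:
  assumes s: "s \<in> Sset G H m" "K \<subseteq> stab G H s"
  shows "restrict_section R s \<in> R \<rightarrow>\<^sub>E fixed_fibre K"
proof (rule PiE_I)
  fix r assume "r \<notin> R"
  then show "restrict_section R s r = undefined" unfolding restrict_section_def by simp
next
  fix r assume r: "r \<in> R"
  have rc: "r \<in> carrier G" using r transversal_carrier by blast
  have Hc: "H \<subseteq> carrier G" using subgroup.subset[OF subgroup_H] .
  have equivariant: "s (k <# x) = Aact G k (s x)" if "k \<in> K" "x \<in> lcosets H" for k x
    using subset_stab_iff[OF s(1) subgroup.subset[OF subgroup_K]] s(2) that by blast
  have rH: "r <# H \<in> lcosets H" unfolding LCOSETS_def using rc by blast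
  define a where "a = s (r <# H)"
  have aA: "a \<in> Aset G H m" and aP: "Pr G H a = r <# H" using SsetD[OF s(1) rH] unfolding a_def by auto
  have "Pr G H (Aact G (inv r) a) = H"
    using Pr_Aact[OF aA] aP lcos_m_assoc[OF Hc] lcos_mult_one[OF Hc] rc by simp
  moreover have "Aact G k (Aact G (inv r) a) = Aact G (inv r) a" if k: "k \<in> K \<inter> H" for k
  proof -
    have kc: "k \<in> carrier G" using k Hc by blast
    have "Aact G k a = s (k <# (r <# H))" using equivariant k rH unfolding a_def by simp
    also have "k <# (r <# H) = r <# H" using lcos_fixed_iff[OF subgroup_H rc kc] k by blast
    finally have "Aact G k a = a" unfolding a_def .
    then have "Aact G (inv r) a = Aact G (inv r) (Aact G k a)" by simp
    also have "\<dots> = Aact G (k \<otimes> inv r) a" using Aact_mult[OF aA] rc kc by (simp add: m_comm)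
    also have "\<dots> = Aact G k (Aact G (inv r) a)" using Aact_mult[OF aA] rc kc by simp
    finally show ?thesis by simp
  qed
  ultimately show "restrict_section R s r \<in> fixed_fibre K"
    using r Aact_closed[OF aA] rc unfolding restrict_section_def fixed_fibre_def a_def by simp
qed

lemma extend_section_mem:
  assumes f: "f \<in> R \<rightarrow>\<^sub>E fixed_fibre K"
  shows "extend_section K R f \<in> Sset G H m" "K \<subseteq> stab G H (extend_section K R f)"
proof -
  have carrier: "k \<otimes> r \<in> carrier G" if "k \<in> K" "r \<in> R" for k r
    using that transversal_carrier subgroup.subset[OF subgroup_K] by auto
  have fA: "f r \<in> Aset G H m" and fP: "Pr G H (f r) = H" if "r \<in> R" for r
    using f that unfolding fixed_fibre_def by auto
  have ext: "extend_section K R f ((k \<otimes> r) <# H) = Aact G (k \<otimes> r) (f r)" if "k \<in> K" "r \<in> R" for k r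
    using extend_section_eq that f by blast
  have "extend_section K R f x \<in> Aset G H m \<and> Pr G H (extend_section K R f x) = x"
    if x: "x \<in> lcosets H" for x
  proof -
    obtain k r where kr: "k \<in> K" "r \<in> R" and xe: "x = (k \<otimes> r) <# H"
      using transversal_decompose[OF x] .
    then show ?thesis
      using ext[OF kr] Aact_closed[OF fA carrier] Pr_Aact[OF fA carrier] fP by simp
  qed
  moreover have "extend_section K R f \<in> extensional (lcosets H)"
    unfolding extend_section_def by simp
  ultimately show S: "extend_section K R f \<in> Sset G H m"
    unfolding Sset_def by blast
  have "extend_section K R f (k0 <# x) = Aact G k0 (extend_section K R f x)"
    if k0: "k0 \<in> K" and x: "x \<in> lcosets H" for k0 x
  proof -
    obtain k r where kr: "k \<in> K" "r \<in> R" and xe: "x = (k \<otimes> r) <# H"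
      using transversal_decompose[OF x] .
    have c: "k0 \<in> carrier G" "k \<in> carrier G" "r \<in> carrier G"
      using k0 kr transversal_carrier subgroup.subset[OF subgroup_K] by auto
    have kk: "k0 \<otimes> k \<in> K" using k0 kr(1) subgroup.m_closed[OF subgroup_K] by blast
    have "k0 <# x = ((k0 \<otimes> k) \<otimes> r) <# H"
      using xe lcos_m_assoc[OF subgroup.subset[OF subgroup_H]] c by (simp add: m_assoc)
    then have "extend_section K R f (k0 <# x) = Aact G (k0 \<otimes> (k \<otimes> r)) (f r)"
      using ext[OF kk kr(2)] c by (simp add: m_assoc)
    also have "\<dots> = Aact G k0 (extend_section K R f x)"
      using Aact_mult[OF fA[OF kr(2)]] ext[OF kr] xe c by simp
    finally show ?thesis .
  qed
  then show "K \<subseteq> stab G H (extend_section K R f)"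
    using subset_stab_iff[OF S subgroup.subset[OF subgroup_K]] by blast
qed

lemma extend_restrict_section:
  assumes s: "s \<in> Sset G H m" "K \<subseteq> stab G H s"
  shows "extend_section K R (restrict_section R s) = s"
proof (rule extensionalityI[of _ "lcosets H"])
  show "extend_section K R (restrict_section R s) \<in> extensional (lcosets H)"
    unfolding extend_section_def by simp
  show "s \<in> extensional (lcosets H)" using Sset_extensional[OF s(1)] .
  fix x assume x: "x \<in> lcosets H"
  obtain k r where kr: "k \<in> K" "r \<in> R" and xe: "x = (k \<otimes> r) <# H"
    using transversal_decompose[OF x] .
  have c: "k \<in> carrier G" "r \<in> carrier G"
    using kr transversal_carrier subgroup.subset[OF subgroup_K] by auto
  have rH: "r <# H \<in> lcosets H" unfolding LCOSETS_def using c by blast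
  have aA: "s (r <# H) \<in> Aset G H m" using SsetD(1)[OF s(1) rH] .
  have "extend_section K R (restrict_section R s) x = Aact G (k \<otimes> r) (restrict_section R s r)"
    using extend_section_eq[OF kr] restrict_section_mem[OF s] kr(2) xe by blast
  also have "\<dots> = Aact G ((k \<otimes> r) \<otimes> inv r) (s (r <# H))"
    using Aact_mult[OF aA] kr(2) c unfolding restrict_section_def by simp
  also have "(k \<otimes> r) \<otimes> inv r = k" using c by (simp add: m_assoc)
  also have "Aact G k (s (r <# H)) = s (k <# (r <# H))"
    using subset_stab_iff[OF s(1) subgroup.subset[OF subgroup_K]] s(2) kr(1) rH by simp
  also have "k <# (r <# H) = x" using xe lcos_m_assoc[OF subgroup.subset[OF subgroup_H]] c by simp
  finally show "extend_section K R (restrict_section R s) x = s x" .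
qed

lemma restrict_extend_section:
  assumes f: "f \<in> R \<rightarrow>\<^sub>E fixed_fibre K"
  shows "restrict_section R (extend_section K R f) = f"
proof (rule extensionalityI[of _ R])
  show "restrict_section R (extend_section K R f) \<in> extensional R"
    unfolding restrict_section_def by simp
  show "f \<in> extensional R" using f by (simp add: PiE_def)
  fix r assume r: "r \<in> R"
  have rc: "r \<in> carrier G" using r transversal_carrier by blast
  have fA: "f r \<in> Aset G H m" using f r unfolding fixed_fibre_def by auto
  have "extend_section K R f (r <# H) = Aact G r (f r)"
    using extend_section_eq[OF subgroup.one_closed[OF subgroup_K] r] f r rc by auto
  then show "restrict_section R (extend_section K R f) r = f r"
    using r rc Aact_mult[OF fA] Aact_one[OF fA] unfolding restrict_section_def by simp
qed

lemma bij_betw_restrict_section: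
  "bij_betw (restrict_section R) {s \<in> Sset G H m. K \<subseteq> stab G H s} (R \<rightarrow>\<^sub>E fixed_fibre K)"
proof (rule bij_betw_byWitness[where f' = "extend_section K R"])
  show "restrict_section R ` {s \<in> Sset G H m. K \<subseteq> stab G H s} \<subseteq> R \<rightarrow>\<^sub>E fixed_fibre K"
    using restrict_section_mem by blast
  show "extend_section K R ` (R \<rightarrow>\<^sub>E fixed_fibre K) \<subseteq> {s \<in> Sset G H m. K \<subseteq> stab G H s}"
    using extend_section_mem by blast
qed (simp_all add: extend_restrict_section restrict_extend_section)

end

lemma card_sections_fixed_by:
  assumes "finite (carrier G)" "subgroup K G"
  shows "card {s \<in> Sset G H m. K \<subseteq> stab G H s} = card (fixed_fibre K) ^ idx (carrier G) (K <#> H)"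
proof -
  have KH: "subgroup (K <#> H) G" using mult_subgroups[OF assms(2) subgroup_H] .
  obtain R where R: "R \<subseteq> carrier G" "bij_betw (\<lambda>r. r <# (K <#> H)) R (lcosets (K <#> H))"
    using transversal_exists[OF KH] .
  have "card R = idx (carrier G) (K <#> H)"
    using bij_betw_same_card[OF R(2)] card_lcosets[OF assms(1) KH] by simp
  moreover have "finite R" using R(1) assms(1) finite_subset by blast
  ultimately show ?thesis
    using bij_betw_same_card[OF bij_betw_restrict_section[OF assms(2) R]] by (simp add: card_PiE)
qed

end

theorem corollary7:
  fixes G :: "('a, 'b) monoid_scheme" and H :: "'a set" and m :: "'a set \<Rightarrow> nat"
  assumes "comm_group G" and "finite (carrier G)" and "subgroup H G"
  shows "(\<forall>K. subgroup K G \<longrightarrow>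
            card {s \<in> Sset G H m. K \<subseteq> stab G H s}
            = (\<Sum>I \<in> {I. subgroup I G \<and> K \<inter> H \<subseteq> I \<and> I \<subseteq> H}. m I * idx H I)
                ^ idx (carrier G) (K <#>\<^bsub>G\<^esub> H))
       \<and> (\<forall>K. subgroup K G \<longrightarrow>
            cnt G H m K
            = (\<Sum>I \<in> {I. subgroup I G \<and> K \<inter> H \<subseteq> I \<and> I \<subseteq> H}. m I * idx H I)
                ^ idx (carrier G) (K <#>\<^bsub>G\<^esub> H)
              - (\<Sum>L \<in> {L. subgroup L G \<and> K \<subset> L}. cnt G H m L))"
proof -
  interpret coset_sections G H m
    using assms(1,3) by (simp add: coset_sections_def coset_sections_axioms_def)
  have fixing: "card {s \<in> Sset G H m. K \<subseteq> stab G H s}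
      = (\<Sum>I \<in> {I. subgroup I G \<and> K \<inter> H \<subseteq> I \<and> I \<subseteq> H}. m I * idx H I) ^ idx (carrier G) (K <#>\<^bsub>G\<^esub> H)"
    if "subgroup K G" for K
    using card_sections_fixed_by[OF assms(2) that] card_fixed_fibre[OF assms(2)] by simp
  have "finite {L. subgroup L G}"
    using assms(2) by (auto intro: finite_subset[of _ "Pow (carrier G)"] dest: subgroup.subset)
  then have "card {s \<in> Sset G H m. K \<subseteq> stab G H s}
      = cnt G H m K + (\<Sum>L \<in> {L. subgroup L G \<and> K \<subset> L}. cnt G H m L)"
    if "subgroup K G" for K
    using card_supsets_eq_sum_fibres[of "Sset G H m" "{L. subgroup L G}" K "stab G H"]
      finite_Sset[OF assms(2)] subgroup_stab that
    unfolding cnt_def by simp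
  then show ?thesis using fixing by simp
qed

end
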